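(* Let $G=(V,E)$ be a control flow graph and $p$ a predicate node. All successors of $p$ in $A_p$ belong to the same strongly connected component of $A_p$.
   Context: A control flow graph (CFG) is a finite directed graph $G=(V,E)$ in which every node has at most two outgoing edges; nodes with exactly two outgoing edges are predicate nodes. A path from $n_1$ is a nonempty finite or infinite sequence of nodes with each adjacent pair an edge; it is maximal if it is infinite or its last node has no successor. $V_p$ is the set of nodes occurring on all maximal paths from $p$ in $G$. For $V'\subseteq V$, a $V'$-interval from $x$ to $y$ is a finite path $n_1\ldots n_k$ in $G$ with $k\ge 2$, $n_1=x\in V'$, $n_k=y\in V'$, and $n_i\notin V'$ for $1<i<k$. $A_p$ is the directed graph with node set $V_p$ and an edge $(x,y)$ iff there is a $V_p$-interval from $x$ to $y$ in $G$. *)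

theory Defs
  imports Main
begin

definition succs :: "('a \<times> 'a) set \<Rightarrow> 'a \<Rightarrow> 'a set" where
  "succs E n = {m. (n, m) \<in> E}"

definition cfg :: "'a set \<Rightarrow> ('a \<times> 'a) set \<Rightarrow> bool" where
  "cfg V E \<longleftrightarrow> finite V \<and> E \<subseteq> V \<times> V \<and> (\<forall>n\<in>V. card (succs E n) \<le> 2)"

definition predicate_node :: "'a set \<Rightarrow> ('a \<times> 'a) set \<Rightarrow> 'a \<Rightarrow> bool" where
  "predicate_node V E p \<longleftrightarrow> p \<in> V \<and> card (succs E p) = 2"

definition fin_path :: "('a \<times> 'a) set \<Rightarrow> 'a list \<Rightarrow> bool" where
  "fin_path E xs \<longleftrightarrow> xs \<noteq> [] \<and> (\<forall>i. Suc i < length xs \<longrightarrow> (xs ! i, xs ! Suc i) \<in> E)"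

definition inf_path :: "('a \<times> 'a) set \<Rightarrow> (nat \<Rightarrow> 'a) \<Rightarrow> bool" where
  "inf_path E f \<longleftrightarrow> (\<forall>i. (f i, f (Suc i)) \<in> E)"

definition max_fin_path_from :: "('a \<times> 'a) set \<Rightarrow> 'a \<Rightarrow> 'a list \<Rightarrow> bool" where
  "max_fin_path_from E p xs \<longleftrightarrow> fin_path E xs \<and> hd xs = p \<and> succs E (last xs) = {}"

definition inf_path_from :: "('a \<times> 'a) set \<Rightarrow> 'a \<Rightarrow> (nat \<Rightarrow> 'a) \<Rightarrow> bool" where
  "inf_path_from E p f \<longleftrightarrow> inf_path E f \<and> f 0 = p"

definition Vp :: "'a set \<Rightarrow> ('a \<times> 'a) set \<Rightarrow> 'a \<Rightarrow> 'a set" where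
  "Vp V E p = {n \<in> V.
     (\<forall>xs. max_fin_path_from E p xs \<longrightarrow> n \<in> set xs) \<and>
     (\<forall>f. inf_path_from E p f \<longrightarrow> n \<in> range f)}"

definition interval :: "('a \<times> 'a) set \<Rightarrow> 'a set \<Rightarrow> 'a \<Rightarrow> 'a \<Rightarrow> 'a list \<Rightarrow> bool" where
  "interval E V' x y xs \<longleftrightarrow> fin_path E xs \<and> length xs \<ge> 2 \<and>
     hd xs = x \<and> x \<in> V' \<and> last xs = y \<and> y \<in> V' \<and>
     (\<forall>i. 0 < i \<and> i < length xs - 1 \<longrightarrow> xs ! i \<notin> V')"

text \<open>Edge relation of A_p (node set V_p).\<close>
definition Ap_edges :: "'a set \<Rightarrow> ('a \<times> 'a) set \<Rightarrow> 'a \<Rightarrow> ('a \<times> 'a) set" where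
  "Ap_edges V E p = {(x, y). \<exists>xs. interval E (Vp V E p) x y xs}"

end

theory Submission
  imports Defs
begin

(* Let ys1, ys2 be V_p-intervals from p to y1, y2. Prefixing a maximal path from y1 with
   butlast ys1 gives a maximal path from p, so every node of V_p lies on butlast ys1 or on
   every maximal path from y1; the only node of V_p on butlast ys1 is p. Hence y2 = p or
   y2 is reached from y1 by a finite path, which splits at its V_p-nodes into V_p-intervals.
   If y2 = p, going round the cycle butlast ys2 forever is an infinite path from p that
   meets V_p only in p. *)

lemma fin_path_take:
  "fin_path E xs \<Longrightarrow> 0 < n \<Longrightarrow> fin_path E (take n xs)"
  unfolding fin_path_def by auto

lemma fin_path_drop:
  "fin_path E xs \<Longrightarrow> n < length xs \<Longrightarrow> fin_path E (drop n xs)"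
  unfolding fin_path_def by auto

lemma fin_path_append:
  assumes "fin_path E xs" "fin_path E ys" "(last xs, hd ys) \<in> E"
  shows "fin_path E (xs @ ys)"
  unfolding fin_path_def
proof (intro conjI allI impI)
  show "xs @ ys \<noteq> []" using assms(1) by (simp add: fin_path_def)
  fix i assume i: "Suc i < length (xs @ ys)"
  consider "Suc i < length xs" | "Suc i = length xs" | "length xs \<le> i" by linarith
  then show "((xs @ ys) ! i, (xs @ ys) ! Suc i) \<in> E"
  proof cases
    case 1 with assms(1) show ?thesis by (simp add: fin_path_def nth_append)
  next
    case 2
    then have "i = length xs - 1" by simp
    with 2 assms show ?thesis
      by (auto simp: fin_path_def nth_append last_conv_nth hd_conv_nth)
  next
    case 3 with assms(2) i show ?thesis
      by (auto simp: fin_path_def nth_append Suc_diff_le)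
  qed
qed

lemma fin_path_butlast:
  assumes "fin_path E xs" "2 \<le> length xs"
  shows "fin_path E (butlast xs)" "(last (butlast xs), last xs) \<in> E"
proof -
  show "fin_path E (butlast xs)"
    using fin_path_take[OF assms(1)] assms(2) by (simp add: butlast_conv_take)
  obtain k where k: "length xs = Suc (Suc k)"
    using assms(2) by (metis add_2_eq_Suc le_Suc_ex)
  then have "Suc k < length xs" "last (butlast xs) = xs ! k" "last xs = xs ! Suc k"
    by (auto simp: last_conv_nth nth_butlast simp flip: length_0_conv)
  then show "(last (butlast xs), last xs) \<in> E"
    using assms(1) by (simp add: fin_path_def)
qed

lemma fin_path_map_upt:
  "(\<And>i. i < n \<Longrightarrow> (f i, f (Suc i)) \<in> E) \<Longrightarrow> fin_path E (map f [0..<Suc n])"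
  unfolding fin_path_def by (simp del: upt_Suc)

lemma inf_path_prepend:
  assumes "fin_path E xs" "inf_path E f" "(last xs, f 0) \<in> E"
  shows "inf_path E (\<lambda>i. if i < length xs then xs ! i else f (i - length xs))"
  unfolding inf_path_def
proof
  fix i
  consider "Suc i < length xs" | "Suc i = length xs" | "length xs \<le> i" by linarith
  then show "((if i < length xs then xs ! i else f (i - length xs)),
              (if Suc i < length xs then xs ! Suc i else f (Suc i - length xs))) \<in> E"
  proof cases
    case 1 with assms(1) show ?thesis by (simp add: fin_path_def)
  next
    case 2
    then have "xs \<noteq> []" "i = length xs - 1" by auto
    with 2 assms(3) show ?thesis by (auto simp: last_conv_nth)
  next
    case 3 with assms(2) show ?thesis by (simp add: inf_path_def Suc_diff_le)
  qed
qed

lemma inf_path_cycle: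
  assumes "fin_path E cs" "(last cs, hd cs) \<in> E"
  shows "inf_path E (\<lambda>i. cs ! (i mod length cs))"
  unfolding inf_path_def
proof
  fix i
  have ne: "cs \<noteq> []" using assms(1) by (simp add: fin_path_def)
  show "(cs ! (i mod length cs), cs ! (Suc i mod length cs)) \<in> E"
  proof (cases "Suc (i mod length cs) = length cs")
    case True
    then have "i mod length cs = length cs - 1" by simp
    with True assms(2) ne show ?thesis
      by (simp add: mod_Suc last_conv_nth hd_conv_nth)
  next
    case False
    then have "Suc (i mod length cs) < length cs"
      using ne by (metis Suc_lessI length_greater_0_conv mod_less_divisor)
    with False assms(1) show ?thesis
      by (simp add: mod_Suc fin_path_def)
  qed
qed

lemma max_path_exists: "(\<exists>xs. max_fin_path_from E x xs) \<or> (\<exists>f. inf_path_from E x f)"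
proof -
  define step where "step y = (if succs E y = {} then y else (SOME z. (y, z) \<in> E))" for y
  define f where "f n = (step ^^ n) x" for n
  have f_edge: "(f n, f (Suc n)) \<in> E" if "succs E (f n) \<noteq> {}" for n
    using that someI_ex[of "\<lambda>z. (f n, z) \<in> E"] by (auto simp: f_def step_def succs_def)
  show ?thesis
  proof (cases "\<exists>n. succs E (f n) = {}")
    case True
    then obtain n where n: "succs E (f n) = {}" and before: "\<forall>i<n. succs E (f i) \<noteq> {}"
      using exists_least_iff[of "\<lambda>n. succs E (f n) = {}"] by blast
    have "fin_path E (map f [0..<Suc n])"
      using fin_path_map_upt[of n f E] f_edge before by blast
    moreover have "hd (map f [0..<Suc n]) = x" by (simp add: f_def hd_map del: upt_Suc)
    moreover have "last (map f [0..<Suc n]) = f n" by simp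
    ultimately have "max_fin_path_from E x (map f [0..<Suc n])"
      using n by (simp add: max_fin_path_from_def)
    then show ?thesis by blast
  next
    case False
    then have "inf_path_from E x f"
      using f_edge by (simp add: inf_path_from_def inf_path_def f_def)
    then show ?thesis by blast
  qed
qed

lemma Vp_subset_prefix_Un:
  assumes xs: "fin_path E xs" and edge: "(last xs, y) \<in> E"
  shows "Vp V E (hd xs) \<subseteq> set xs \<union> Vp V E y"
proof
  fix n assume n: "n \<in> Vp V E (hd xs)"
  show "n \<in> set xs \<union> Vp V E y"
  proof (cases "n \<in> set xs")
    case False
    have "n \<in> set zs" if zs: "max_fin_path_from E y zs" for zs
    proof -
      have "max_fin_path_from E (hd xs) (xs @ zs)"
        using zs xs edge fin_path_append[of E xs zs]
        by (auto simp: max_fin_path_from_def fin_path_def)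
      with n False show ?thesis by (auto simp: Vp_def)
    qed
    moreover have "n \<in> range f" if f: "inf_path_from E y f" for f
    proof -
      define g where "g i = (if i < length xs then xs ! i else f (i - length xs))" for i
      have "inf_path E g"
        unfolding g_def using f edge inf_path_prepend[OF xs] by (auto simp: inf_path_from_def)
      moreover have "g 0 = hd xs" using xs by (simp add: g_def fin_path_def hd_conv_nth)
      ultimately have "inf_path_from E (hd xs) g" by (simp add: inf_path_from_def)
      with n obtain i where "n = g i" by (auto simp: Vp_def)
      with False show ?thesis by (auto simp: g_def split: if_splits)
    qed
    ultimately show ?thesis using n by (simp add: Vp_def)
  qed simp
qed

lemma Vp_subset_cycle:
  assumes cs: "fin_path E cs" and edge: "(last cs, hd cs) \<in> E"
  shows "Vp V E (hd cs) \<subseteq> set cs"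
proof -
  have ne: "cs \<noteq> []" using cs by (simp add: fin_path_def)
  let ?g = "\<lambda>i. cs ! (i mod length cs)"
  have "inf_path_from E (hd cs) ?g"
    using inf_path_cycle[OF cs edge] ne by (simp add: inf_path_from_def hd_conv_nth)
  moreover have "range ?g \<subseteq> set cs" using ne by auto
  ultimately show ?thesis by (auto simp: Vp_def)
qed

lemma Vp_reachable:
  assumes "y \<in> Vp V E x"
  obtains ys where "fin_path E ys" "hd ys = x" "last ys = y"
  using max_path_exists[of E x]
proof (elim disjE exE)
  fix zs assume zs: "max_fin_path_from E x zs"
  with assms obtain m where m: "m < length zs" "zs ! m = y"
    by (auto simp: Vp_def in_set_conv_nth)
  show thesis
  proof
    show "fin_path E (take (Suc m) zs)"
      using zs fin_path_take by (auto simp: max_fin_path_from_def)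
    show "hd (take (Suc m) zs) = x" using zs by (auto simp: max_fin_path_from_def fin_path_def)
    show "last (take (Suc m) zs) = y" using m by (simp add: take_Suc_conv_app_nth)
  qed
next
  fix f assume f: "inf_path_from E x f"
  with assms obtain m where m: "f m = y" by (auto simp: Vp_def)
  show thesis
  proof
    show "fin_path E (map f [0..<Suc m])"
      using f fin_path_map_upt by (auto simp: inf_path_from_def inf_path_def)
    show "hd (map f [0..<Suc m]) = x" using f by (simp add: inf_path_from_def hd_map del: upt_Suc)
    show "last (map f [0..<Suc m]) = y" using m by simp
  qed
qed

lemma interval_butlast:
  assumes iv: "interval E W x y xs"
  shows "fin_path E (butlast xs)" "hd (butlast xs) = x" "(last (butlast xs), y) \<in> E"
    and "set (butlast xs) \<inter> W \<subseteq> {x}"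
proof -
  have xs: "fin_path E xs" "2 \<le> length xs" using iv by (auto simp: interval_def)
  show "fin_path E (butlast xs)" "(last (butlast xs), y) \<in> E"
    using fin_path_butlast[OF xs] iv by (auto simp: interval_def)
  show "hd (butlast xs) = x"
    using iv xs(2) by (cases xs) (auto simp: interval_def)
  show "set (butlast xs) \<inter> W \<subseteq> {x}"
  proof
    fix z assume "z \<in> set (butlast xs) \<inter> W"
    then obtain i where "i < length xs - 1" "z = xs ! i" "z \<in> W"
      by (auto simp: in_set_conv_nth nth_butlast)
    with iv xs(2) show "z \<in> {x}"
      by (cases "i = 0") (auto simp: interval_def hd_conv_nth simp flip: length_greater_0_conv)
  qed
qed

lemma fin_path_rtrancl_intervals:
  assumes "fin_path E xs" "hd xs \<in> W" "last xs \<in> W"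
  shows "(hd xs, last xs) \<in> {(x, y). \<exists>zs. interval E W x y zs}\<^sup>*"
  using assms
proof (induction "length xs" arbitrary: xs rule: less_induct)
  case less
  show ?case
  proof (cases "2 \<le> length xs")
    case False
    with less.prems(1) obtain a where "xs = [a]"
      by (cases xs) (auto simp: fin_path_def Suc_le_eq)
    then show ?thesis by simp
  next
    case True
    have "0 < length xs - 1 \<and> xs ! (length xs - 1) \<in> W"
      using True less.prems(3) by (auto simp: last_conv_nth simp flip: length_greater_0_conv)
    then obtain i where i: "i \<le> length xs - 1" "0 < i" "xs ! i \<in> W"
      and first: "\<forall>j<i. \<not> (0 < j \<and> xs ! j \<in> W)"
      using ex_least_nat_le[of "\<lambda>i. 0 < i \<and> xs ! i \<in> W"] by blast
    have i_lt: "i < length xs" using i(1) True by simp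
    have "interval E W (hd xs) (xs ! i) (take (Suc i) xs)"
      using i first less.prems(1,2) True fin_path_take[OF less.prems(1)]
      by (auto simp: interval_def fin_path_def hd_conv_nth last_conv_nth)
    moreover have "(hd (drop i xs), last (drop i xs)) \<in> {(x, y). \<exists>zs. interval E W x y zs}\<^sup>*"
      using i i_lt less.prems fin_path_drop[OF less.prems(1) i_lt]
      by (intro less.hyps) (auto simp: hd_drop_conv_nth)
    ultimately show ?thesis
      using i True by (auto simp: hd_drop_conv_nth intro: converse_rtrancl_into_rtrancl)
  qed
qed

lemma Ap_successors_reach:
  assumes "(p, y1) \<in> Ap_edges V E p" "(p, y2) \<in> Ap_edges V E p"
  shows "(y1, y2) \<in> (Ap_edges V E p)\<^sup>*"
proof -
  let ?W = "Vp V E p"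
  obtain ys1 ys2 where iv1: "interval E ?W p y1 ys1" and iv2: "interval E ?W p y2 ys2"
    using assms by (auto simp: Ap_edges_def)
  then have y1: "y1 \<in> ?W" and y2: "y2 \<in> ?W" by (auto simp: interval_def)
  show ?thesis
  proof (cases "y2 = p")
    case True
    then have "?W \<subseteq> set (butlast ys2)"
      using Vp_subset_cycle interval_butlast(1-3)[OF iv2] by metis
    then have "?W \<subseteq> {p}" using interval_butlast(4)[OF iv2] by blast
    with y1 True show ?thesis by auto
  next
    case False
    have "?W \<subseteq> set (butlast ys1) \<union> Vp V E y1"
      using Vp_subset_prefix_Un interval_butlast(1-3)[OF iv1] by metis
    with y2 False interval_butlast(4)[OF iv1] have "y2 \<in> Vp V E y1" by auto
    then obtain zs where "fin_path E zs" "hd zs = y1" "last zs = y2" by (rule Vp_reachable)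
    with y1 y2 show ?thesis
      using fin_path_rtrancl_intervals[of E zs ?W] by (simp add: Ap_edges_def)
  qed
qed

theorem lemma4p7:
  assumes "cfg V E"
    and "predicate_node V E p"
    and "(p, y1) \<in> Ap_edges V E p"
    and "(p, y2) \<in> Ap_edges V E p"
  shows "(y1, y2) \<in> (Ap_edges V E p)\<^sup>* \<and> (y2, y1) \<in> (Ap_edges V E p)\<^sup>*"
  using Ap_successors_reach[OF assms(3,4)] Ap_successors_reach[OF assms(4,3)] by blast

end
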